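(* The zero-error feedback capacity of a finite-state erasure channel with maximal ratio $\tau$ is $C_{0f}=1-\tau$.
   Context: Logarithms are to base $q=|\mathcal{X}|\ge2$, $\mathcal{X}$ the finite input alphabet. Finite-state erasure channel: a strongly connected directed graph $\mathscr{G}=(\mathcal{S},\mathcal{E})$ with finite vertex set $\mathcal{S}$ (channel states) and $\mathcal{E}\subseteq\mathcal{S}\times\mathcal{S}$, each edge labelled $\ell(e)\in\{0,1\}$, distinct edges leaving the same state having distinct labels. A noise word $v(0:n)$ is admissible from initial state $s_0$ if it is the label sequence of a walk starting at $s_0$; output $y(t)=x(t)$ if $v(t)=0$ and $y(t)=*$ (a symbol not in $\mathcal{X}$) if $v(t)=1$. The initial state is arbitrary and unknown. The maximal ratio is $\tau=\max_i e_i/l_i$ over directed simple cycles ($e_i$ = number of edges labelled 1, $l_i$ = length). Zero-error feedback code of block length $n+1$: a finite message set $\mathcal{M}$ and encoding functions $f_t:\mathcal{M}\times(\mathcal{X}\cup\{*\})^t\to\mathcal{X}$, $t=0,\dots,n$, with channel input $x(t)=f_t(m,y(0:t-1))$; it is zero-error if no output word $y(0:n)$ can arise (for any initial state and any admissible noise) from two distinct messages. $C_{0f}=\sup_{n\in\mathbb{N}_0}\sup \log|\mathcal{M}|/(n+1)$ over all zero-error feedback codes of block length $n+1$. *)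

theory Defs
  imports Complex_Main
begin

text \<open>Finite-state erasure channel: vertex set S (channel states), edge set E,
  edge labelling lab (True = label 1 = erasure, False = label 0).\<close>

definition fs_erasure_channel :: "'s set \<Rightarrow> ('s \<times> 's) set \<Rightarrow> ('s \<times> 's \<Rightarrow> bool) \<Rightarrow> bool" where
  "fs_erasure_channel S E lab \<longleftrightarrow>
     finite S \<and> S \<noteq> {} \<and> E \<subseteq> S \<times> S \<and>
     (\<forall>s\<in>S. \<forall>t\<in>S. (s, t) \<in> E\<^sup>+) \<and>
     (\<forall>s t t'. (s, t) \<in> E \<longrightarrow> (s, t') \<in> E \<longrightarrow> t \<noteq> t' \<longrightarrow> lab (s, t) \<noteq> lab (s, t'))"

definition admissible :: "('s \<times> 's) set \<Rightarrow> ('s \<times> 's \<Rightarrow> bool) \<Rightarrow> 's \<Rightarrow> bool list \<Rightarrow> bool" where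
  "admissible E lab s0 v \<longleftrightarrow>
     (\<exists>p :: nat \<Rightarrow> 's. p 0 = s0 \<and>
        (\<forall>i < length v. (p i, p (Suc i)) \<in> E \<and> lab (p i, p (Suc i)) = v ! i))"

definition simple_cycle :: "('s \<times> 's) set \<Rightarrow> 's list \<Rightarrow> bool" where
  "simple_cycle E cs \<longleftrightarrow> cs \<noteq> [] \<and> distinct cs \<and>
     (\<forall>i < length cs. (cs ! i, cs ! ((i + 1) mod length cs)) \<in> E)"

definition cycle_ones :: "('s \<times> 's \<Rightarrow> bool) \<Rightarrow> 's list \<Rightarrow> nat" where
  "cycle_ones lab cs = card {i. i < length cs \<and> lab (cs ! i, cs ! ((i + 1) mod length cs))}"

definition max_ratio :: "('s \<times> 's) set \<Rightarrow> ('s \<times> 's \<Rightarrow> bool) \<Rightarrow> real" where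
  "max_ratio E lab = Max {real (cycle_ones lab cs) / real (length cs) | cs. simple_cycle E cs}"

text \<open>Channel output under a feedback encoder f (f t m ys = x(t), ys = y(0:t-1)); the
  erasure symbol * is None.  outp f m v t = y(0:t-1).\<close>

fun outp :: "(nat \<Rightarrow> 'm \<Rightarrow> 'x option list \<Rightarrow> 'x) \<Rightarrow> 'm \<Rightarrow> bool list \<Rightarrow> nat \<Rightarrow> 'x option list" where
  "outp f m v 0 = []"
| "outp f m v (Suc t) =
     (let ys = outp f m v t in ys @ [if v ! t then None else Some (f t m ys)])"

definition channel_output :: "(nat \<Rightarrow> 'm \<Rightarrow> 'x option list \<Rightarrow> 'x) \<Rightarrow> 'm \<Rightarrow> bool list \<Rightarrow> 'x option list" where
  "channel_output f m v = outp f m v (length v)"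

text \<open>Zero-error feedback code of block length n+1 with message set M.\<close>

definition zero_error_fb_code ::
  "'s set \<Rightarrow> ('s \<times> 's) set \<Rightarrow> ('s \<times> 's \<Rightarrow> bool) \<Rightarrow> nat \<Rightarrow> 'm set \<Rightarrow> (nat \<Rightarrow> 'm \<Rightarrow> 'x option list \<Rightarrow> 'x) \<Rightarrow> bool" where
  "zero_error_fb_code S E lab n M f \<longleftrightarrow> finite M \<and> M \<noteq> {} \<and>
     (\<forall>m1\<in>M. \<forall>m2\<in>M. \<forall>s1\<in>S. \<forall>s2\<in>S. \<forall>v1 v2.
        m1 \<noteq> m2 \<longrightarrow> length v1 = Suc n \<longrightarrow> length v2 = Suc n \<longrightarrow>
        admissible E lab s1 v1 \<longrightarrow> admissible E lab s2 v2 \<longrightarrow>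
        channel_output f m1 v1 \<noteq> channel_output f m2 v2)"

definition C0f :: "'x itself \<Rightarrow> 's set \<Rightarrow> ('s \<times> 's) set \<Rightarrow> ('s \<times> 's \<Rightarrow> bool) \<Rightarrow> real" where
  "C0f _ S E lab = Sup {r. \<exists>n (M :: nat set) (f :: nat \<Rightarrow> nat \<Rightarrow> 'x option list \<Rightarrow> 'x).
        zero_error_fb_code S E lab n M f \<and>
        r = log (real (card (UNIV :: 'x set))) (real (card M)) / real (Suc n)}"

end

theory Submission
  imports Defs "HOL-Library.Cardinality"
begin

text \<open>Converse: entering a simple cycle of maximal ratio \<open>\<tau>\<close> at a suitable rotation gives,
  for every \<open>N\<close>, an admissible noise word of length \<open>N\<close> with at least \<open>\<tau>N\<close> erasures.
  Along a fixed noise word the output is determined by the unerased symbols, so a zero-error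
  code has at most \<open>q ^ ((1 - \<tau>) N)\<close> messages.

  Achievability: closing the walk behind an admissible word by a return walk of bounded length
  and cutting the closed walk into simple cycles shows that every admissible word of length
  \<open>N\<close> has at most \<open>\<tau>N + D\<close> erasures. Hence the feedback code that retransmits each symbol of a
  \<open>q\<close>-ary word of length \<open>\<lfloor>(1 - \<tau>)N - D\<rfloor>\<close> until it gets through is zero-error, and
  its rate tends to \<open>1 - \<tau>\<close>.\<close>

section \<open>Walks and their label words\<close>

abbreviation walk :: "('s \<times> 's) set \<Rightarrow> 's list \<Rightarrow> bool" where
  "walk E \<equiv> successively (\<lambda>a b. (a, b) \<in> E)"

fun walk_labels :: "('s \<times> 's \<Rightarrow> bool) \<Rightarrow> 's list \<Rightarrow> bool list" where
  "walk_labels lab (a # b # r) = lab (a, b) # walk_labels lab (b # r)"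
| "walk_labels lab _ = []"

definition erasures :: "bool list \<Rightarrow> nat" where
  "erasures v = length (filter id v)"

lemma length_walk_labels [simp]: "length (walk_labels lab W) = length W - 1"
  by (induction lab W rule: walk_labels.induct) auto

lemma nth_walk_labels: "Suc i < length W \<Longrightarrow> walk_labels lab W ! i = lab (W ! i, W ! Suc i)"
  by (induction lab W arbitrary: i rule: walk_labels.induct) (auto simp: nth_Cons split: nat.splits)

lemma walk_labels_append:
  "walk_labels lab (xs @ y # ys) = walk_labels lab (xs @ [y]) @ walk_labels lab (y # ys)"
proof (induction xs)
  case (Cons a xs) then show ?case by (cases xs) auto
qed auto

lemma walk_labels_append_nonempty:
  "xs \<noteq> [] \<Longrightarrow> walk_labels lab (xs @ ys) = walk_labels lab xs @ walk_labels lab (last xs # ys)"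
  using walk_labels_append[of lab "butlast xs" "last xs" ys]
  by (metis append_butlast_last_id append_Cons append_Nil append_assoc)

lemma erasures_append [simp]: "erasures (v @ w) = erasures v + erasures w"
  by (simp add: erasures_def)

lemma erasures_le_length: "erasures v \<le> length v"
  by (simp add: erasures_def)

lemma admissible_iff_walk:
  "admissible E lab s0 v \<longleftrightarrow>
     (\<exists>W. walk E W \<and> hd W = s0 \<and> length W = Suc (length v) \<and> walk_labels lab W = v)"
proof
  assume "admissible E lab s0 v"
  then obtain p where p: "p 0 = s0"
    "\<And>i. i < length v \<Longrightarrow> (p i, p (Suc i)) \<in> E \<and> lab (p i, p (Suc i)) = v ! i"
    unfolding admissible_def by blast
  define W where "W = map p [0..<Suc (length v)]"
  have "walk E W"
    unfolding W_def successively_conv_nth using p(2) by (auto simp del: upt_Suc)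
  moreover have "walk_labels lab W = v"
    by (rule nth_equalityI) (auto simp: W_def nth_walk_labels p(2) simp del: upt_Suc)
  moreover have "hd W = s0"
    unfolding W_def using p(1) by (simp add: hd_map del: upt_Suc)
  ultimately show "\<exists>W. walk E W \<and> hd W = s0 \<and> length W = Suc (length v) \<and> walk_labels lab W = v"
    unfolding W_def by auto
next
  assume "\<exists>W. walk E W \<and> hd W = s0 \<and> length W = Suc (length v) \<and> walk_labels lab W = v"
  then obtain W where W: "walk E W" "hd W = s0" "length W = Suc (length v)" "walk_labels lab W = v"
    by blast
  show "admissible E lab s0 v"
    unfolding admissible_def
  proof (intro exI[of _ "(!) W"] conjI allI impI)
    show "W ! 0 = s0" using W(2,3) by (cases W) auto
    fix i assume "i < length v"
    then show "(W ! i, W ! Suc i) \<in> E" "lab (W ! i, W ! Suc i) = v ! i"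
      using successively_nth[OF W(1), of i] nth_walk_labels[of i W lab] W(3,4) by simp_all
  qed
qed

lemma nth_closed_cycle:
  assumes "i < length cs"
  shows "(cs @ [hd cs]) ! i = cs ! i" "(cs @ [hd cs]) ! Suc i = cs ! ((i + 1) mod length cs)"
proof -
  show "(cs @ [hd cs]) ! i = cs ! i" using assms by (simp add: nth_append)
  show "(cs @ [hd cs]) ! Suc i = cs ! ((i + 1) mod length cs)"
  proof (cases "Suc i < length cs")
    case False
    then have "Suc i = length cs" "cs \<noteq> []" using assms by auto
    then show ?thesis by (simp add: nth_append hd_conv_nth)
  qed (simp add: nth_append)
qed

lemma simple_cycle_iff_closed_walk:
  "simple_cycle E cs \<longleftrightarrow> cs \<noteq> [] \<and> distinct cs \<and> walk E (cs @ [hd cs])"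
  unfolding simple_cycle_def successively_conv_nth by (auto simp: nth_closed_cycle)

lemma erasures_closed_cycle: "erasures (walk_labels lab (cs @ [hd cs])) = cycle_ones lab cs"
  unfolding erasures_def length_filter_conv_card cycle_ones_def
  by (rule arg_cong[where f = card]) (auto simp: nth_walk_labels nth_closed_cycle)

lemma closed_walk_cases:
  assumes "length W \<ge> 2" "hd W = last W"
  obtains "distinct (butlast W)" "butlast W \<noteq> []" "W = butlast W @ [hd (butlast W)]"
  | A z B C where "W = A @ [z] @ B @ [z] @ C" "C \<noteq> []"
proof (cases "distinct (butlast W)")
  case True
  have ne: "butlast W \<noteq> []" using assms(1) by (cases W rule: rev_cases) auto
  have "hd (butlast W) = hd W" using ne by (cases W rule: rev_cases) auto
  then have "W = butlast W @ [hd (butlast W)]" using assms ne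
    by (metis append_butlast_last_id butlast.simps(1))
  then show ?thesis using True ne that(1) by blast
next
  case False
  then obtain A z B C where "butlast W = A @ [z] @ B @ [z] @ C"
    using not_distinct_decomp by blast
  then have "W = A @ [z] @ B @ [z] @ (C @ [last W])"
    using assms(1) by (metis append_assoc append_butlast_last_id list.size(3) not_numeral_le_zero)
  then show ?thesis using that(2) by blast
qed

lemma walk_split_at_repeat:
  assumes "walk E (A @ [z] @ B @ [z] @ C)"
  shows "walk E (z # B @ [z])" "walk E (A @ [z] @ C)"
proof -
  have A: "walk E (A @ [z])" and BC: "walk E ((z # B) @ (z # C))"
    using assms by (auto simp: successively_append_iff)
  then have "walk E ((z # B) @ [z])" and C: "walk E (z # C)"
    by (auto simp: successively_append_iff simp del: append_Cons)
  then show "walk E (z # B @ [z])" by simp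
  show "walk E (A @ [z] @ C)"
    using A C successively_append_iff[of _ A "z # C"] successively_append_iff[of _ A "[z]"] by auto
qed

lemma erasures_split_at_repeat:
  "erasures (walk_labels lab (A @ [z] @ B @ [z] @ C)) =
     erasures (walk_labels lab (z # B @ [z])) + erasures (walk_labels lab (A @ [z] @ C))"
  using walk_labels_append[of lab A z "B @ z # C"] walk_labels_append[of lab "z # B" z C]
    walk_labels_append[of lab A z C]
  by simp

text \<open>Splitting a closed walk at a repeated vertex into two shorter closed walks decomposes it
  into simple cycles, so every cycle ratio bound is inherited by closed walks.\<close>

lemma closed_walk_erasures_le:
  assumes cycles: "\<And>cs. simple_cycle E cs \<Longrightarrow> real (cycle_ones lab cs) \<le> t * real (length cs)"
  shows "walk E W \<Longrightarrow> W \<noteq> [] \<Longrightarrow> hd W = last W \<Longrightarrow>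
    real (erasures (walk_labels lab W)) \<le> t * real (length W - 1)"
proof (induction "length W" arbitrary: W rule: less_induct)
  case less
  show ?case
  proof (cases "length W \<ge> 2")
    case False
    then obtain a where "W = [a]" using less(3) by (cases W; cases "tl W") auto
    then show ?thesis by (simp add: erasures_def)
  next
    case True
    from this less(4) show ?thesis
    proof (cases rule: closed_walk_cases)
      case 1
      note closed = 1(3)
      from less(2) have "walk E (butlast W @ [hd (butlast W)])" by (subst (asm) closed)
      then have "simple_cycle E (butlast W)"
        using 1(1,2) simple_cycle_iff_closed_walk by blast
      then have "real (cycle_ones lab (butlast W)) \<le> t * real (length W - 1)"
        using cycles by (metis length_butlast)
      moreover have "erasures (walk_labels lab W) = cycle_ones lab (butlast W)"
        by (subst closed) (rule erasures_closed_cycle)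
      ultimately show ?thesis by simp
    next
      case (2 A z B C)
      have "walk E (z # B @ [z])" "walk E (A @ [z] @ C)"
        using walk_split_at_repeat less(2)[unfolded 2(1)] by simp_all
      moreover have "hd (A @ [z] @ C) = last (A @ [z] @ C)"
        using 2 less(4) by (cases A) auto
      moreover have "length (z # B @ [z]) < length W" "length (A @ [z] @ C) < length W"
        using 2 by auto
      ultimately have "real (erasures (walk_labels lab (z # B @ [z]))) \<le> t * real (length B + 1)"
        "real (erasures (walk_labels lab (A @ [z] @ C))) \<le> t * real (length A + length C)"
        using less(1)[of "z # B @ [z]"] less(1)[of "A @ [z] @ C"] by simp_all
      then show ?thesis
        using 2(1) erasures_split_at_repeat[of lab A z B C] by (simp add: algebra_simps)
    qed
  qed
qed

text \<open>With \<open>t = -1\<close> the bound above fails for every closed walk of positive length.\<close>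

lemma closed_walk_imp_simple_cycle:
  assumes "walk E W" "length W \<ge> 2" "hd W = last W"
  shows "\<exists>cs. simple_cycle E cs"
proof (rule ccontr)
  assume "\<nexists>cs. simple_cycle E cs"
  then have "real (erasures (walk_labels (\<lambda>_. False) W)) \<le> -1 * real (length W - 1)"
    using assms by (intro closed_walk_erasures_le) auto
  then show False using assms(2) by simp
qed

lemma trancl_imp_walk:
  "(a, b) \<in> E\<^sup>+ \<Longrightarrow> \<exists>W. walk E W \<and> hd W = a \<and> last W = b \<and> length W \<ge> 2"
proof (induction rule: converse_trancl_induct)
  case (base y)
  then show ?case by (intro exI[of _ "[y, b]"]) auto
next
  case (step x y)
  then obtain W where W: "walk E W" "hd W = y" "last W = b" "length W \<ge> 2" by blast
  then obtain r where "W = y # r" by (cases W) auto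
  then show ?case using W step by (intro exI[of _ "x # W"]) auto
qed

section \<open>Rotations of a cycle\<close>

lemma sum_mod_shift:
  fixes h :: "nat \<Rightarrow> 'a::comm_monoid_add"
  shows "(\<Sum>k<l. h ((k + i) mod l)) = (\<Sum>k<l. h k)"
proof (induction i arbitrary: h)
  case (Suc i)
  have shift1: "(\<Sum>k<l. g ((k + 1) mod l)) = (\<Sum>k<l. g k)" for g :: "nat \<Rightarrow> 'a"
  proof (cases l)
    case (Suc m)
    have "(\<Sum>k<Suc m. g ((k + 1) mod Suc m)) = (\<Sum>k<m. g ((k + 1) mod Suc m)) + g 0"
      by simp
    also have "(\<Sum>k<m. g ((k + 1) mod Suc m)) = (\<Sum>k<m. g (Suc k))"
      by (rule sum.cong) auto
    finally show ?thesis
      using Suc by (simp add: sum.lessThan_Suc_shift ac_simps del: sum.lessThan_Suc)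
  qed simp
  have "(\<Sum>k<l. h ((k + Suc i) mod l)) = (\<Sum>k<l. h ((((k + 1) mod l) + i) mod l))"
    by (rule sum.cong) (auto simp: mod_add_left_eq)
  also have "\<dots> = (\<Sum>k<l. h ((k + i) mod l))"
    using shift1[of "\<lambda>k. h ((k + i) mod l)"] .
  finally show ?case using Suc by simp
qed simp

lemma ex_ge_average:
  fixes f :: "nat \<Rightarrow> nat"
  assumes "(\<Sum>k<l. f k) = c" "0 < l"
  shows "\<exists>k<l. c \<le> f k * l"
proof (rule ccontr)
  assume "\<not> ?thesis"
  then have "(\<Sum>k<l. f k * l) < (\<Sum>k<l. c)"
    using assms(2) by (intro sum_strict_mono) auto
  then show False using assms(1) by (simp add: sum_distrib_right[symmetric])
qed

definition rotation_walk :: "'s list \<Rightarrow> nat \<Rightarrow> nat \<Rightarrow> 's list" where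
  "rotation_walk cs k N = map (\<lambda>i. cs ! ((k + i) mod length cs)) [0..<Suc N]"

lemma walk_rotation_walk:
  assumes "simple_cycle E cs"
  shows "walk E (rotation_walk cs k N)"
  unfolding rotation_walk_def successively_conv_nth
proof (intro allI impI)
  fix i assume "Suc i < length (map (\<lambda>i. cs ! ((k + i) mod length cs)) [0..<Suc N])"
  then have "i < N" by simp
  define j where "j = (k + i) mod length cs"
  have "j < length cs" "(k + Suc i) mod length cs = (j + 1) mod length cs"
    using assms unfolding j_def simple_cycle_def by (auto simp: mod_Suc_eq)
  then show "(map (\<lambda>i. cs ! ((k + i) mod length cs)) [0..<Suc N] ! i,
      map (\<lambda>i. cs ! ((k + i) mod length cs)) [0..<Suc N] ! Suc i) \<in> E"
    using assms \<open>i < N\<close> unfolding simple_cycle_def j_def by (simp del: upt_Suc)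
qed

lemma erasures_map_upt: "erasures (map P [0..<N]) = (\<Sum>i<N. of_bool (P i))"
  by (simp add: erasures_def length_filter_conv_card lessThan_def Int_def conj_commute cong: conj_cong)

lemma sum_erasures_rotation_walk:
  "(\<Sum>k<length cs. erasures (walk_labels lab (rotation_walk cs k N))) = N * cycle_ones lab cs"
proof -
  define l where "l = length cs"
  define g where "g j = lab (cs ! j, cs ! ((j + 1) mod l))" for j
  have rot: "erasures (walk_labels lab (rotation_walk cs k N)) = (\<Sum>i<N. of_bool (g ((k + i) mod l)))"
    for k
  proof -
    have "(k + Suc i) mod l = ((k + i) mod l + 1) mod l" for i
      by (simp add: mod_Suc_eq)
    then have "walk_labels lab (rotation_walk cs k N) = map (\<lambda>i. g ((k + i) mod l)) [0..<N]"
      by (intro nth_equalityI) (auto simp: rotation_walk_def nth_walk_labels l_def g_def simp del: upt_Suc)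
    then show ?thesis by (simp add: erasures_map_upt)
  qed
  have "(\<Sum>k<l. erasures (walk_labels lab (rotation_walk cs k N))) =
      (\<Sum>i<N. \<Sum>k<l. of_bool (g ((k + i) mod l)))"
    unfolding rot by (rule sum.swap)
  also have "\<dots> = (\<Sum>i<N. \<Sum>k<l. of_bool (g k))"
    by (intro sum.cong refl sum_mod_shift)
  also have "\<dots> = N * cycle_ones lab cs"
    unfolding cycle_ones_def g_def l_def by (simp add: lessThan_def Int_def conj_commute cong: conj_cong)
  finally show ?thesis unfolding l_def .
qed

section \<open>Feedback codes along a fixed noise word\<close>

definition received :: "'x option list \<Rightarrow> 'x list" where
  "received ys = map the (filter (\<lambda>y. y \<noteq> None) ys)"

lemma received_outp_Suc:
  "received (outp f m v (Suc t)) =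
     received (outp f m v t) @ (if v ! t then [] else [f t m (outp f m v t)])"
  by (simp add: received_def Let_def)

lemma length_received_outp:
  "t \<le> length v \<Longrightarrow> length (received (outp f m v t)) = length (filter Not (take t v))"
proof (induction t)
  case (Suc t)
  then show ?case by (simp add: received_outp_Suc take_Suc_conv_app_nth del: outp.simps)
qed (simp add: received_def)

lemma outp_eq_if_received_eq:
  "received (outp f m v t) = received (outp g m' v t) \<Longrightarrow> outp f m v t = outp g m' v t"
proof (induction t)
  case (Suc t)
  then have "outp f m v t = outp g m' v t"
    and "\<not> v ! t \<Longrightarrow> f t m (outp f m v t) = g t m' (outp g m' v t)"
    by (auto simp: received_outp_Suc split: if_splits simp del: outp.simps)
  then show ?case by (simp add: Let_def)
qed simp

lemma received_outp_prefix:
  assumes "\<And>t ys. f t m ys = w ! length (received ys)"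
  shows "take (length w) (received (outp f m v t)) = take (length (received (outp f m v t))) w"
proof (induction t)
  case (Suc t)
  define r where "r = received (outp f m v t)"
  have IH: "take (length w) r = take (length r) w" using Suc unfolding r_def .
  show ?case
  proof (cases "v ! t")
    case True
    then show ?thesis using IH by (simp add: received_outp_Suc r_def[symmetric] del: outp.simps)
  next
    case False
    then have "received (outp f m v (Suc t)) = r @ [w ! length r]"
      using assms by (simp add: received_outp_Suc r_def del: outp.simps)
    then show ?thesis using IH by (cases "length r < length w") (auto simp: take_Suc_conv_app_nth)
  qed
qed (simp add: received_def)

lemma length_filter_Not: "length (filter Not v) = length v - erasures v"
  using sum_length_filter_compl[of id v] by (simp add: erasures_def)

lemma length_received_channel_output:
  "length (received (channel_output f m v)) = length v - erasures v"
  by (simp add: channel_output_def length_received_outp length_filter_Not)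

lemma card_zero_error_code_le:
  fixes f :: "nat \<Rightarrow> 'm \<Rightarrow> 'x::finite option list \<Rightarrow> 'x"
  assumes code: "zero_error_fb_code S E lab n M f" and v: "s \<in> S"
    "admissible E lab s v" "length v = Suc n"
  shows "card M \<le> CARD('x) ^ (Suc n - erasures v)"
proof -
  let ?g = "\<lambda>m. received (channel_output f m v)"
  have "inj_on ?g M"
  proof (rule inj_onI, rule ccontr)
    fix m1 m2 assume m: "m1 \<in> M" "m2 \<in> M" "?g m1 = ?g m2" "m1 \<noteq> m2"
    then have "channel_output f m1 v = channel_output f m2 v"
      unfolding channel_output_def by (intro outp_eq_if_received_eq) simp
    moreover have "channel_output f m1 v \<noteq> channel_output f m2 v"
      using code m v unfolding zero_error_fb_code_def by blast
    ultimately show False by simp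
  qed
  then have "card M = card (?g ` M)" by (simp add: card_image)
  also have "\<dots> \<le> card {xs. set xs \<subseteq> (UNIV :: 'x set) \<and> length xs = Suc n - erasures v}"
    by (rule card_mono[OF finite_lists_length_eq])
       (auto simp: length_received_channel_output v(3))
  also have "\<dots> = CARD('x) ^ (Suc n - erasures v)" by (rule card_lists_length_eq) simp
  finally show ?thesis .
qed

lemma zero_error_code_rate_le:
  fixes f :: "nat \<Rightarrow> 'm \<Rightarrow> 'x::finite option list \<Rightarrow> 'x"
  assumes q: "CARD('x) \<ge> 2" and code: "zero_error_fb_code S E lab n M f"
    and v: "s \<in> S" "admissible E lab s v" "length v = Suc n"
    and heavy: "t * real (Suc n) \<le> real (erasures v)"
  shows "log CARD('x) (card M) / real (Suc n) \<le> 1 - t"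
proof -
  have "card M > 0" using code unfolding zero_error_fb_code_def by (simp add: card_gt_0_iff)
  then have "log CARD('x) (card M) \<le> log CARD('x) (CARD('x) ^ (Suc n - erasures v))"
    using card_zero_error_code_le[OF code v] q by (subst log_le_cancel_iff) auto
  also have "\<dots> = real (Suc n - erasures v)" using q by (simp add: log_nat_power)
  also have "\<dots> \<le> (1 - t) * real (Suc n)"
    using heavy erasures_le_length[of v] v(3) by (simp add: of_nat_diff algebra_simps)
  finally show ?thesis by (simp add: divide_le_eq)
qed

text \<open>The feedback encoder sends the symbol of the codeword indexed by the number of symbols
  received so far, i.e. it retransmits each symbol until it gets through; once the codeword is
  exhausted the (out-of-range) symbol sent is irrelevant.\<close>

definition retransmission_encoder :: "('m \<Rightarrow> 'x list) \<Rightarrow> nat \<Rightarrow> 'm \<Rightarrow> 'x option list \<Rightarrow> 'x" where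
  "retransmission_encoder h t m ys = h m ! length (received ys)"

lemma retransmission_code_zero_error:
  assumes h: "inj_on h M" "\<And>m. m \<in> M \<Longrightarrow> length (h m) = k" and M: "finite M" "M \<noteq> {}"
    and few_erasures: "\<And>s v. s \<in> S \<Longrightarrow> admissible E lab s v \<Longrightarrow> length v = Suc n \<Longrightarrow>
      k + erasures v \<le> Suc n"
  shows "zero_error_fb_code S E lab n M (retransmission_encoder h)"
  unfolding zero_error_fb_code_def
proof (intro conjI M ballI allI impI notI)
  fix m1 m2 s1 s2 v1 v2
  assume m: "m1 \<in> M" "m2 \<in> M" "s1 \<in> S" "s2 \<in> S" "m1 \<noteq> m2" "length v1 = Suc n"
    "length v2 = Suc n" "admissible E lab s1 v1" "admissible E lab s2 v2"
    and Y: "channel_output (retransmission_encoder h) m1 v1 =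
      channel_output (retransmission_encoder h) m2 v2"
  have decode: "take k (received (channel_output (retransmission_encoder h) m v)) = h m"
    if "m \<in> M" "s \<in> S" "admissible E lab s v" "length v = Suc n" for m s v
  proof -
    let ?r = "received (channel_output (retransmission_encoder h) m v)"
    have "k \<le> length ?r"
      using few_erasures[OF that(2-4)] that(4) by (simp add: length_received_channel_output)
    moreover have "take (length (h m)) ?r = take (length ?r) (h m)"
      unfolding channel_output_def
      by (rule received_outp_prefix) (simp add: retransmission_encoder_def)
    ultimately show ?thesis using h(2)[OF that(1)] by simp
  qed
  have "h m1 = h m2" using decode[OF m(1,3,8,6)] decode[OF m(2,4,9,7)] Y by simp
  then show False using h(1) m(1,2,5) by (auto dest: inj_onD)
qed

lemma ex_zero_error_code_rate_ge:
  assumes q: "CARD('x::finite) \<ge> 2"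
    and D: "\<And>s v. s \<in> S \<Longrightarrow> admissible E lab s v \<Longrightarrow> real (erasures v) \<le> t * real (length v) + D"
  shows "\<exists>M (f :: nat \<Rightarrow> nat \<Rightarrow> 'x option list \<Rightarrow> 'x). zero_error_fb_code S E lab n M f \<and>
     1 - t - (D + 1) / real (Suc n) \<le> log CARD('x) (card M) / real (Suc n)"
proof -
  define x where "x = (1 - t) * real (Suc n) - D"
  define k where "k = nat \<lfloor>x\<rfloor>"
  define L where "L = {xs. set xs \<subseteq> (UNIV :: 'x set) \<and> length xs = k}"
  have "finite L" unfolding L_def by (rule finite_lists_length_eq) simp
  then obtain h where h: "bij_betw h {0..<card L} L" using ex_bij_betw_nat_finite by blast
  have cardL: "card L = CARD('x) ^ k" unfolding L_def by (rule card_lists_length_eq) simp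
  have "zero_error_fb_code S E lab n {0..<card L} (retransmission_encoder h)"
  proof (rule retransmission_code_zero_error)
    show "inj_on h {0..<card L}" using h by (rule bij_betw_imp_inj_on)
    show "length (h m) = k" if "m \<in> {0..<card L}" for m
      using h that unfolding bij_betw_def L_def by auto
    show "{0..<card L} \<noteq> {}" using cardL q by auto
    show "k + erasures v \<le> Suc n" if "s \<in> S" "admissible E lab s v" "length v = Suc n" for s v
    proof -
      have "real k \<le> max 0 x" unfolding k_def by linarith
      then have "real k \<le> real (Suc n) - real (erasures v)"
        using D[OF that(1,2)] that(3) erasures_le_length[of v] unfolding x_def
        by (simp add: algebra_simps)
      then show ?thesis by linarith
    qed
  qed simp
  moreover have "1 - t - (D + 1) / real (Suc n) \<le> log CARD('x) (card {0..<card L}) / real (Suc n)"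
  proof -
    have "log CARD('x) (card {0..<card L}) = real k" using q by (simp add: cardL log_nat_power)
    moreover have "(x - 1) / real (Suc n) \<le> real k / real (Suc n)"
      unfolding k_def by (intro divide_right_mono) linarith+
    moreover have "(x - 1) / real (Suc n) = 1 - t - (D + 1) / real (Suc n)"
      unfolding x_def by (simp add: field_simps)
    ultimately show ?thesis by simp
  qed
  ultimately show ?thesis by blast
qed

section \<open>Cycle ratios of the channel graph\<close>

locale erasure_channel =
  fixes S :: "'s set" and E :: "('s \<times> 's) set" and lab :: "'s \<times> 's \<Rightarrow> bool"
  assumes channel: "fs_erasure_channel S E lab"
begin

lemma finite_states: "finite S" and states_nonempty: "S \<noteq> {}" and edges_subset: "E \<subseteq> S \<times> S"
  and strongly_connected: "\<And>s t. s \<in> S \<Longrightarrow> t \<in> S \<Longrightarrow> (s, t) \<in> E\<^sup>+"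
  using channel unfolding fs_erasure_channel_def by auto

lemma set_simple_cycle_subset:
  assumes "simple_cycle E cs"
  shows "set cs \<subseteq> S"
proof
  fix x assume "x \<in> set cs"
  then obtain i where "i < length cs" "x = cs ! i" by (auto simp: in_set_conv_nth)
  then show "x \<in> S" using assms edges_subset unfolding simple_cycle_def by blast
qed

lemma finite_simple_cycles: "finite {cs. simple_cycle E cs}"
proof (rule finite_subset[OF _ finite_lists_length_le[OF finite_states, of "card S"]])
  have "length cs \<le> card S" if "simple_cycle E cs" for cs
  proof -
    have "length cs = card (set cs)"
      using that distinct_card unfolding simple_cycle_def by metis
    then show ?thesis using card_mono[OF finite_states set_simple_cycle_subset[OF that]] by simp
  qed
  then show "{cs. simple_cycle E cs} \<subseteq> {cs. set cs \<subseteq> S \<and> length cs \<le> card S}"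
    using set_simple_cycle_subset by blast
qed

lemma ex_simple_cycle: "\<exists>cs. simple_cycle E cs"
proof -
  obtain s where s: "s \<in> S" using states_nonempty by blast
  from trancl_imp_walk[OF strongly_connected[OF s s]]
  obtain W where "walk E W" "hd W = s" "last W = s" "length W \<ge> 2" by blast
  then show ?thesis by (intro closed_walk_imp_simple_cycle[of E W]) simp_all
qed

abbreviation "tau \<equiv> max_ratio E lab"

lemma finite_cycle_ratios:
  "finite {real (cycle_ones lab cs) / real (length cs) | cs. simple_cycle E cs}"
  using finite_simple_cycles by (simp add: setcompr_eq_image)

lemma max_ratio_attained: "\<exists>cs. simple_cycle E cs \<and> tau = real (cycle_ones lab cs) / real (length cs)"
  using Max_in[OF finite_cycle_ratios] ex_simple_cycle unfolding max_ratio_def by fastforce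

lemma cycle_ones_le_max_ratio:
  assumes "simple_cycle E cs"
  shows "real (cycle_ones lab cs) \<le> tau * real (length cs)"
proof -
  have "real (cycle_ones lab cs) / real (length cs) \<le> tau"
    unfolding max_ratio_def using assms by (intro Max_ge[OF finite_cycle_ratios]) auto
  moreover have "length cs > 0" using assms unfolding simple_cycle_def by simp
  ultimately show ?thesis by (simp add: divide_le_eq)
qed

lemma max_ratio_le_1: "tau \<le> 1"
proof -
  obtain cs where "simple_cycle E cs" "tau = real (cycle_ones lab cs) / real (length cs)"
    using max_ratio_attained by blast
  moreover have "cycle_ones lab cs \<le> card {..<length cs}"
    unfolding cycle_ones_def by (rule card_mono) auto
  ultimately show ?thesis by (simp add: divide_le_eq_1)
qed

lemma last_walk_in_states: "walk E W \<Longrightarrow> W \<noteq> [] \<Longrightarrow> hd W \<in> S \<Longrightarrow> last W \<in> S"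
proof (induction W rule: induct_list012)
  case (3 a b W)
  then show ?case using edges_subset by auto
qed auto

lemma bounded_return_walks:
  "\<exists>D. \<forall>a\<in>S. \<forall>b\<in>S. \<exists>P. walk E P \<and> hd P = a \<and> last P = b \<and> P \<noteq> [] \<and> length P \<le> D"
proof -
  define g where "g a b = (SOME P. walk E P \<and> hd P = a \<and> last P = b \<and> P \<noteq> [])" for a b
  have g: "walk E (g a b) \<and> hd (g a b) = a \<and> last (g a b) = b \<and> g a b \<noteq> []"
    if "a \<in> S" "b \<in> S" for a b
  proof -
    have "\<exists>P. walk E P \<and> hd P = a \<and> last P = b \<and> P \<noteq> []"
      using trancl_imp_walk[OF strongly_connected[OF that]] by auto
    then show ?thesis unfolding g_def by (rule someI_ex)
  qed
  define D where "D = Max ((\<lambda>(a, b). length (g a b)) ` (S \<times> S))"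
  have "length (g a b) \<le> D" if "a \<in> S" "b \<in> S" for a b
    unfolding D_def using finite_states that by (intro Max_ge) force+
  then show ?thesis using g by blast
qed

text \<open>Close the walk behind an admissible word by a bounded return walk; the closed walk
  obeys the cycle bound, and the return walk costs at most a constant.\<close>

lemma admissible_erasures_le:
  "\<exists>D. \<forall>s v. s \<in> S \<longrightarrow> admissible E lab s v \<longrightarrow> real (erasures v) \<le> tau * real (length v) + D"
proof -
  obtain D where D: "\<forall>a\<in>S. \<forall>b\<in>S. \<exists>P. walk E P \<and> hd P = a \<and> last P = b \<and> P \<noteq> [] \<and> length P \<le> D"
    using bounded_return_walks by blast
  have "real (erasures v) \<le> tau * real (length v) + real D"
    if s: "s \<in> S" and "admissible E lab s v" for s v
  proof -
    obtain W where W: "walk E W" "hd W = s" "length W = Suc (length v)" "walk_labels lab W = v"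
      using \<open>admissible E lab s v\<close> unfolding admissible_iff_walk by blast
    have "W \<noteq> []" using W(3) by auto
    then have "last W \<in> S" using last_walk_in_states[OF W(1)] W(2) s by simp
    then obtain P where P: "walk E P" "hd P = last W" "last P = s" "P \<noteq> []" "length P \<le> D"
      using D s by blast
    then obtain P' where P': "P = last W # P'" by (cases P) auto
    define C where "C = W @ P'"
    have "walk E C"
      using W(1) P(1) unfolding C_def P' by (auto simp: successively_append_iff successively_Cons)
    moreover have "hd C = last C"
      using \<open>W \<noteq> []\<close> W(2) P(3) unfolding C_def P' by (cases P' rule: rev_cases) auto
    moreover have "walk_labels lab C = v @ walk_labels lab P"
      unfolding C_def P' W(4)[symmetric] using \<open>W \<noteq> []\<close> by (rule walk_labels_append_nonempty)
    ultimately have "real (erasures v + erasures (walk_labels lab P)) \<le> tau * real (length v + length P')"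
      using closed_walk_erasures_le[of E lab tau C] cycle_ones_le_max_ratio \<open>W \<noteq> []\<close>
      by (simp add: C_def W(3))
    moreover have "tau * real (length P') \<le> real D"
      using max_ratio_le_1 P(5) P' mult_right_mono[of tau 1 "real (length P')"] by simp
    ultimately show ?thesis by (simp add: distrib_left)
  qed
  then show ?thesis by blast
qed

lemma ex_heavy_admissible_word:
  "\<exists>s\<in>S. \<exists>v. admissible E lab s v \<and> length v = N \<and> tau * real N \<le> real (erasures v)"
proof -
  obtain cs where cs: "simple_cycle E cs" "tau = real (cycle_ones lab cs) / real (length cs)"
    using max_ratio_attained by blast
  then have l: "length cs > 0" unfolding simple_cycle_def by simp
  obtain k where k: "k < length cs"
    "N * cycle_ones lab cs \<le> erasures (walk_labels lab (rotation_walk cs k N)) * length cs"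
    using ex_ge_average[OF sum_erasures_rotation_walk l] by blast
  let ?W = "rotation_walk cs k N"
  have "admissible E lab (cs ! k) (walk_labels lab ?W)"
    unfolding admissible_iff_walk using walk_rotation_walk[OF cs(1)] k(1)
    by (intro exI[of _ ?W]) (simp add: rotation_walk_def hd_map del: upt_Suc)
  moreover have "cs ! k \<in> S" using set_simple_cycle_subset[OF cs(1)] k(1) by auto
  moreover have "tau * real N \<le> real (erasures (walk_labels lab ?W))"
  proof -
    have "real N * real (cycle_ones lab cs) \<le> real (erasures (walk_labels lab ?W)) * real (length cs)"
      using k(2) by (metis of_nat_le_iff of_nat_mult)
    moreover have "real (cycle_ones lab cs) = real (length cs) * tau" using cs(2) l by simp
    ultimately have "real (length cs) * (tau * real N) \<le> real (length cs) * real (erasures (walk_labels lab ?W))"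
      by (simp add: algebra_simps)
    then show ?thesis using l by (simp add: mult_le_cancel_left_pos)
  qed
  moreover have "length (walk_labels lab ?W) = N" by (simp add: rotation_walk_def)
  ultimately show ?thesis by blast
qed

end

lemma cSup_eq_approx:
  fixes R :: "real set"
  assumes upper: "\<And>r. r \<in> R \<Longrightarrow> r \<le> c"
    and approx: "\<And>n. \<exists>r\<in>R. c - K / real (Suc n) \<le> r"
  shows "Sup R = c"
proof (rule cSup_eq)
  show "r \<le> c" if "r \<in> R" for r using upper that .
  fix y assume y: "\<And>r. r \<in> R \<Longrightarrow> r \<le> y"
  show "c \<le> y"
  proof (rule ccontr)
    assume "\<not> c \<le> y"
    then obtain n where "K / (c - y) < real n" using reals_Archimedean2 by blast
    then have "K / real (Suc n) < c - y"
      using \<open>\<not> c \<le> y\<close> by (simp add: field_simps)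
    moreover obtain r where "r \<in> R" "c - K / real (Suc n) \<le> r" using approx by blast
    ultimately show False using y by fastforce
  qed
qed

theorem theorem3:
  fixes S :: "'s set" and E :: "('s \<times> 's) set" and lab :: "'s \<times> 's \<Rightarrow> bool"
  assumes "card (UNIV :: 'x::finite set) \<ge> 2"
    and "fs_erasure_channel S E lab"
  shows "C0f TYPE('x) S E lab = 1 - max_ratio E lab"
proof -
  interpret erasure_channel S E lab by (rule erasure_channel.intro) (rule assms(2))
  obtain D where D: "\<And>s v. s \<in> S \<Longrightarrow> admissible E lab s v \<Longrightarrow>
      real (erasures v) \<le> tau * real (length v) + D"
    using admissible_erasures_le by blast
  define R where "R = {r. \<exists>n (M :: nat set) (f :: nat \<Rightarrow> nat \<Rightarrow> 'x option list \<Rightarrow> 'x).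
    zero_error_fb_code S E lab n M f \<and> r = log CARD('x) (card M) / real (Suc n)}"
  have "C0f TYPE('x) S E lab = Sup R" unfolding C0f_def R_def ..
  also have "Sup R = 1 - tau"
  proof (rule cSup_eq_approx)
    fix r assume "r \<in> R"
    then obtain n M and f :: "nat \<Rightarrow> nat \<Rightarrow> 'x option list \<Rightarrow> 'x" where
      code: "zero_error_fb_code S E lab n M f" and r: "r = log CARD('x) (card M) / real (Suc n)"
      unfolding R_def by blast
    obtain s v where "s \<in> S" "admissible E lab s v" "length v = Suc n"
      "tau * real (Suc n) \<le> real (erasures v)"
      using ex_heavy_admissible_word by blast
    then show "r \<le> 1 - tau" unfolding r by (rule zero_error_code_rate_le[OF assms(1) code])
  next
    fix n
    have "\<exists>M (f :: nat \<Rightarrow> nat \<Rightarrow> 'x option list \<Rightarrow> 'x). zero_error_fb_code S E lab n M f \<and>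
        1 - tau - (D + 1) / real (Suc n) \<le> log CARD('x) (card M) / real (Suc n)"
      by (rule ex_zero_error_code_rate_ge[OF assms(1) D])
    then show "\<exists>r\<in>R. 1 - tau - (D + 1) / real (Suc n) \<le> r" unfolding R_def by blast
  qed
  finally show ?thesis .
qed

end
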